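(* Let $X\in RV_+^p(\alpha)$ with $n\Pr(b_n^{-1}X\in\cdot)\stackrel{v}{\to}\nu_X(\cdot)$, and suppose $X$ satisfies the lower-tail condition $n\Pr\{X_i\le\exp(-kb_n)\}\to0$ for every $k>0$ and $i=1,\ldots,p$. Then for $a\in\mathbb{R}$, with $a\circ X=t\{a\,t^{-1}(X)\}$, $$n\Pr\{b_n^{-1}(a\circ X)\in\cdot\}\stackrel{v}{\to}a^{\alpha}\nu_X(\cdot)\ \text{if } a>0,\qquad n\Pr\{b_n^{-1}(a\circ X)\in\cdot\}\stackrel{v}{\to}0\ \text{if } a\le0,$$ vague convergence in the space of nonnegative Radon measures on $[0,\infty]^p\setminus\{0\}$.
   Context: $t(y)=\log\{1+\exp(y)\}$, $t^{-1}(x)=\log\{\exp(x)-1\}$, applied componentwise, extended by $t(-\infty)=0$, $t^{-1}(0)=-\infty$, $t(\infty)=t^{-1}(\infty)=\infty$. A random vector $X$ with values in $[0,\infty)^p$ is in $RV_+^p(\alpha)$ if there exist $b_n\to\infty$ and a nonzero measure $\nu_X$ with $n\Pr(b_n^{-1}X\in\cdot)\stackrel{v}{\to}\nu_X(\cdot)$ vaguely in the nonnegative Radon measures on $[0,\infty]^p\setminus\{0\}$. *)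

theory Defs
  imports "HOL-Probability.Probability"
begin

definition tfun :: "ereal \<Rightarrow> ennreal" where
  "tfun y = (case y of ereal r \<Rightarrow> ennreal (ln (1 + exp r)) | PInfty \<Rightarrow> \<infinity> | MInfty \<Rightarrow> 0)"

definition tinv :: "real \<Rightarrow> ereal" where
  "tinv x = (if x = 0 then -\<infinity> else ereal (ln (exp x - 1)))"

definition tcirc :: "real \<Rightarrow> ('p \<Rightarrow> real) \<Rightarrow> ('p \<Rightarrow> ennreal)" where
  "tcirc a x = (\<lambda>i. tfun (ereal a * tinv (x i)))"

definition emb :: "('p \<Rightarrow> real) \<Rightarrow> ('p \<Rightarrow> ennreal)" where
  "emb x = (\<lambda>i. ennreal (x i))"

definition scalev :: "real \<Rightarrow> ('p \<Rightarrow> ennreal) \<Rightarrow> ('p \<Rightarrow> ennreal)" where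
  "scalev c v = (\<lambda>i. v i / ennreal c)"

text \<open>Vague convergence of measures on E = [0,inf]^p minus {0}: convergence of integrals
  of all nonnegative continuous functions with compact support in E, i.e. continuous on the
  compact space [0,inf]^p and vanishing on a neighbourhood of 0.\<close>
definition vague_conv ::
  "(nat \<Rightarrow> ('p::finite \<Rightarrow> ennreal) measure) \<Rightarrow> ('p \<Rightarrow> ennreal) measure \<Rightarrow> bool" where
  "vague_conv \<mu> \<nu> \<longleftrightarrow>
     (\<forall>f :: ('p \<Rightarrow> ennreal) \<Rightarrow> real.
        continuous_on UNIV f \<and> (\<forall>x. 0 \<le> f x) \<and>
        (\<exists>U. open U \<and> (\<lambda>_. 0) \<in> U \<and> (\<forall>x\<in>U. f x = 0)) \<longrightarrow>
        ((\<lambda>n. \<integral>\<^sup>+ x. ennreal (f x) \<partial>(\<mu> n)) \<longlongrightarrow> (\<integral>\<^sup>+ x. ennreal (f x) \<partial>\<nu>)) sequentially)"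

text \<open>Nonnegative Radon measure on E (extended to [0,inf]^p with no mass at 0).\<close>
definition radon_E :: "('p::finite \<Rightarrow> ennreal) measure \<Rightarrow> bool" where
  "radon_E \<nu> \<longleftrightarrow> sets \<nu> = sets borel \<and> emeasure \<nu> {\<lambda>_. 0} = 0 \<and>
     (\<forall>K. compact K \<and> (\<lambda>_. 0) \<notin> K \<longrightarrow> emeasure \<nu> K < \<infinity>)"

definition RV_plus ::
  "real \<Rightarrow> 'a measure \<Rightarrow> ('a \<Rightarrow> 'p::finite \<Rightarrow> real) \<Rightarrow> (nat \<Rightarrow> real) \<Rightarrow> ('p \<Rightarrow> ennreal) measure \<Rightarrow> bool"
  where
  "RV_plus \<alpha> M X b \<nu> \<longleftrightarrow>
     prob_space M \<and> X \<in> borel_measurable M \<and> (\<forall>\<omega>\<in>space M. \<forall>i. 0 \<le> X \<omega> i) \<and>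
     \<alpha> > 0 \<and> filterlim b at_top sequentially \<and>
     radon_E \<nu> \<and> emeasure \<nu> (space \<nu>) \<noteq> 0 \<and>
     (\<forall>t>0. \<forall>A\<in>sets borel.
        emeasure \<nu> ((\<lambda>x. \<lambda>i. ennreal t * x i) ` A) = ennreal (t powr (-\<alpha>)) * emeasure \<nu> A) \<and>
     vague_conv (\<lambda>n. scale_measure (of_nat n) (distr M borel (\<lambda>\<omega>. scalev (b n) (emb (X \<omega>))))) \<nu>"

end

theory Submission
  imports Defs
begin

text \<open>For \<open>a > 0\<close> the map \<open>s \<mapsto> t(a t\<^sup>-\<^sup>1(s))\<close> differs from \<open>s \<mapsto> a s\<close> by at most
  \<open>(a + 1) log 2\<close>, so after division by \<open>b\<^sub>n \<rightarrow> \<infinity>\<close> the vectors \<open>(a \<circ> X)/b\<^sub>n\<close> and \<open>a X/b\<^sub>n\<close> are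
  uniformly close. A test function is uniformly continuous on the compact cube \<open>[0,\<infinity>]\<^sup>p\<close> and
  vanishes on a box around 0, so its integrals against the two scaled laws differ by at most
  \<open>\<epsilon>\<close> times the integral of a fixed cutoff function, which stays bounded by vague convergence.
  The limit for \<open>a X/b\<^sub>n\<close> is the image of \<open>\<nu>\<close> under \<open>x \<mapsto> a x\<close>, i.e. \<open>a\<^sup>\<alpha> \<nu>\<close> by homogeneity.
  For \<open>a \<le> 0\<close> there is no mass in the limit: \<open>0 \<circ> X = log 2\<close> is bounded, and for \<open>a < 0\<close> a
  coordinate of \<open>a \<circ> X\<close> above \<open>\<delta> b\<^sub>n\<close> forces \<open>X\<^sub>i \<le> exp(-k b\<^sub>n)\<close>, an event of probability
  \<open>o(1/n)\<close> by the lower-tail condition.\<close>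

lemma tendsto_coordinatewise:
  fixes g :: "'b \<Rightarrow> 'p::finite \<Rightarrow> 'c::topological_space"
  assumes "\<And>i. ((\<lambda>n. g n i) \<longlongrightarrow> l i) F"
  shows "(g \<longlongrightarrow> l) F"
  using assms unfolding limitin_canonical_iff[symmetric] euclidean_product_topology[symmetric]
  by (simp add: limitin_componentwise)

lemma compact_UNIV_ennreal_fun: "compact (UNIV :: ('p::finite \<Rightarrow> ennreal) set)"
proof -
  have "compact_space (euclidean :: ennreal topology)"
    by (simp add: compact_space_def compact_UNIV)
  then have "compact_space (product_topology (\<lambda>i::'p. euclidean :: ennreal topology) UNIV)"
    by (simp add: compact_space_product_topology)
  then show ?thesis
    by (simp add: euclidean_product_topology compact_space_def)
qed

lemma open_coordinatewise_less: "open {x::'p::finite \<Rightarrow> ennreal. \<forall>i. x i < c}"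
proof -
  have "{x::'p \<Rightarrow> ennreal. \<forall>i. x i < c} = (\<Inter>i. (\<lambda>x. x i) -` {..<c})" by auto
  also have "open \<dots>"
    by (intro open_INT) (auto intro!: open_vimage continuous_on_product_coordinates)
  finally show ?thesis .
qed

lemma closed_coordinatewise_ge: "closed {x::'p::finite \<Rightarrow> ennreal. \<exists>i. c \<le> x i}"
proof -
  have "{x::'p \<Rightarrow> ennreal. \<exists>i. c \<le> x i} = - {x. \<forall>i. x i < c}"
    using not_less by blast
  then show ?thesis by (simp add: closed_def open_coordinatewise_less)
qed

lemma tendsto_ennreal_approx:
  fixes I J :: "nat \<Rightarrow> ennreal"
  assumes I: "I \<longlonglongrightarrow> L"
    and close: "\<And>e. e > 0 \<Longrightarrow> eventually (\<lambda>n. J n \<le> I n + ennreal e \<and> I n \<le> J n + ennreal e) sequentially"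
  shows "J \<longlonglongrightarrow> L"
proof (rule Liminf_eq_Limsup)
  have "Limsup sequentially J \<le> L + ennreal e" "L \<le> Liminf sequentially J + ennreal e"
    if e: "e > 0" for e
  proof -
    have "(\<lambda>n. I n + ennreal e) \<longlonglongrightarrow> L + ennreal e"
      using I by (intro tendsto_add tendsto_const)
    then have "Limsup sequentially (\<lambda>n. I n + ennreal e) = L + ennreal e"
      by (simp add: lim_imp_Limsup)
    moreover have "Limsup sequentially J \<le> Limsup sequentially (\<lambda>n. I n + ennreal e)"
      using close[OF e] by (intro Limsup_mono) (auto elim: eventually_mono)
    ultimately show "Limsup sequentially J \<le> L + ennreal e" by simp
    have "L = Liminf sequentially I"
      using I by (simp add: lim_imp_Liminf)
    also have "\<dots> \<le> Liminf sequentially (\<lambda>n. J n + ennreal e)"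
      using close[OF e] by (intro Liminf_mono) (auto elim: eventually_mono)
    also have "\<dots> = Liminf sequentially J + ennreal e"
      by (simp add: Liminf_add_const)
    finally show "L \<le> Liminf sequentially J + ennreal e" .
  qed
  then have "Limsup sequentially J \<le> L" "L \<le> Liminf sequentially J"
    by (auto intro: ennreal_le_epsilon)
  then show "Liminf sequentially J = L" "Limsup sequentially J = L"
    using Liminf_le_Limsup[of sequentially J] by auto
qed simp

lemma open_contains_box:
  fixes U :: "('p::finite \<Rightarrow> ennreal) set"
  assumes "open U" "(\<lambda>_. 0) \<in> U"
  shows "\<exists>d>0. \<forall>x. (\<forall>i. x i < ennreal d) \<longrightarrow> x \<in> U"
proof (rule ccontr)
  assume "\<not> ?thesis"
  then have "\<forall>n. \<exists>x. (\<forall>i. x i < ennreal (1 / Suc n)) \<and> x \<notin> U"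
    by auto
  then obtain xs where xs: "\<And>n. (\<forall>i. xs n i < ennreal (1 / Suc n)) \<and> xs n \<notin> U"
    by metis
  have "xs \<longlonglongrightarrow> (\<lambda>_. 0)"
  proof (rule tendsto_coordinatewise)
    fix i
    have "(\<lambda>n. ennreal (1 / Suc n)) \<longlonglongrightarrow> ennreal 0"
      by (intro tendsto_ennrealI LIMSEQ_inverse_real_of_nat[unfolded inverse_eq_divide])
    then have lim: "(\<lambda>n. ennreal (1 / Suc n)) \<longlonglongrightarrow> 0"
      by simp
    have "xs n i \<le> ennreal (1 / Suc n)" for n
      using xs[of n] less_imp_le by blast
    then show "(\<lambda>n. xs n i) \<longlonglongrightarrow> 0"
      by (intro tendsto_sandwich[OF _ _ tendsto_const lim]) simp_all
  qed
  then have "eventually (\<lambda>n. xs n \<in> U) sequentially"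
    using assms by (auto simp: tendsto_def)
  then obtain N where "\<forall>n\<ge>N. xs n \<in> U" by (auto simp: eventually_sequentially)
  then show False using xs[of N] by auto
qed

definition coord_close :: "real \<Rightarrow> ('p \<Rightarrow> ennreal) \<Rightarrow> ('p \<Rightarrow> ennreal) \<Rightarrow> bool" where
  "coord_close h x y \<longleftrightarrow> (\<forall>i. x i \<le> y i + ennreal h \<and> y i \<le> x i + ennreal h)"

lemma coord_close_mono: "coord_close h x y \<Longrightarrow> h \<le> h' \<Longrightarrow> coord_close h' x y"
  unfolding coord_close_def by (meson add_left_mono ennreal_leI order_trans)

lemma ennreal_le_add_of_abs_diff_le:
  assumes "0 \<le> u" "0 \<le> v" "\<bar>u - v\<bar> \<le> h"
  shows "ennreal u \<le> ennreal v + ennreal h"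
proof -
  have "ennreal u \<le> ennreal (v + h)" using assms by (intro ennreal_leI) linarith
  also have "\<dots> = ennreal v + ennreal h" using assms by (intro ennreal_plus) auto
  finally show ?thesis .
qed

lemma continuous_on_ennreal_fun_uniform:
  fixes f :: "('p::finite \<Rightarrow> ennreal) \<Rightarrow> real"
  assumes f: "continuous_on UNIV f" and e: "e > 0"
  shows "\<exists>h>0. \<forall>x y. coord_close h x y \<longrightarrow> \<bar>f x - f y\<bar> < e"
proof (rule ccontr)
  assume "\<not> ?thesis"
  then have "\<exists>x y. coord_close (1 / Suc n) x y \<and> \<bar>f x - f y\<bar> \<ge> e" for n
    by (metis not_less of_nat_0_less_iff zero_less_Suc zero_less_divide_1_iff)
  then obtain xs ys where xy: "\<And>n. coord_close (1 / Suc n) (xs n) (ys n) \<and> \<bar>f (xs n) - f (ys n)\<bar> \<ge> e"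
    by metis
  obtain l r where r: "strict_mono r" and lim: "(xs \<circ> r) \<longlonglongrightarrow> l"
    using compact_imp_seq_compact[OF compact_UNIV_ennreal_fun] unfolding seq_compact_def by blast
  have "(ys \<circ> r) \<longlonglongrightarrow> l"
  proof (rule tendsto_coordinatewise, rule tendsto_ennreal_approx)
    fix i
    show "(\<lambda>n. xs (r n) i) \<longlonglongrightarrow> l i"
      using continuous_on_tendsto_compose[OF continuous_on_product_coordinates lim, of i]
      by (simp add: o_def)
    fix d :: real assume "d > 0"
    then have "eventually (\<lambda>n. 1 / Suc (r n) < d) sequentially"
      using LIMSEQ_subseq_LIMSEQ[OF LIMSEQ_inverse_real_of_nat r]
      by (auto simp: o_def inverse_eq_divide dest: order_tendstoD(2))
    then show "eventually (\<lambda>n. (ys \<circ> r) n i \<le> xs (r n) i + ennreal d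
        \<and> xs (r n) i \<le> (ys \<circ> r) n i + ennreal d) sequentially"
    proof eventually_elim
      case (elim n)
      then have "ennreal (1 / Suc (r n)) \<le> ennreal d" by (intro ennreal_leI) simp
      then show ?case
        using xy[of "r n"] unfolding coord_close_def o_def
        by (meson add_left_mono order_trans)
    qed
  qed
  then have "(\<lambda>n. \<bar>f ((xs \<circ> r) n) - f ((ys \<circ> r) n)\<bar>) \<longlonglongrightarrow> \<bar>f l - f l\<bar>"
    using lim by (intro tendsto_intros continuous_on_tendsto_compose[OF f]) (auto simp: o_def)
  then have "eventually (\<lambda>n. \<bar>f ((xs \<circ> r) n) - f ((ys \<circ> r) n)\<bar> < e) sequentially"
    using e by (intro order_tendstoD(2)) auto
  then obtain N where "\<bar>f (xs (r N)) - f (ys (r N))\<bar> < e"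
    by (auto simp: eventually_sequentially)
  then show False
    using xy[of "r N"] by simp
qed

definition vague_test :: "(('p::finite \<Rightarrow> ennreal) \<Rightarrow> real) \<Rightarrow> bool" where
  "vague_test f \<longleftrightarrow> continuous_on UNIV f \<and> (\<forall>x. 0 \<le> f x) \<and>
     (\<exists>U. open U \<and> (\<lambda>_. 0) \<in> U \<and> (\<forall>x\<in>U. f x = 0))"

lemma vague_conv_iff_vague_test:
  "vague_conv \<mu> \<nu> \<longleftrightarrow>
     (\<forall>f. vague_test f \<longrightarrow> (\<lambda>n. \<integral>\<^sup>+ x. ennreal (f x) \<partial>(\<mu> n)) \<longlonglongrightarrow> (\<integral>\<^sup>+ x. ennreal (f x) \<partial>\<nu>))"
  by (simp add: vague_conv_def vague_test_def)

lemma vague_test_vanishes_on_box: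
  assumes "vague_test f"
  obtains d where "d > 0" "\<And>x. (\<forall>i. x i < ennreal d) \<Longrightarrow> f x = 0"
proof -
  obtain U where "open U" "(\<lambda>_. 0) \<in> U" "\<forall>x\<in>U. f x = 0"
    using assms by (auto simp: vague_test_def)
  then show ?thesis
    using open_contains_box[of U] that by blast
qed

lemma vague_test_bounded:
  assumes "vague_test f"
  obtains B where "B \<ge> 0" "\<And>x. f x \<le> B"
proof -
  have "continuous_on UNIV f" "\<And>x. 0 \<le> f x"
    using assms by (auto simp: vague_test_def)
  then obtain x0 where "\<And>x. f x \<le> f x0"
    using continuous_attains_sup[OF compact_UNIV_ennreal_fun] by blast
  then show ?thesis
    using that \<open>\<And>x. 0 \<le> f x\<close> by blast
qed

lemma borel_measurable_vague_test:
  "vague_test f \<Longrightarrow> (\<lambda>x. ennreal (f x)) \<in> borel_measurable borel"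
  unfolding vague_test_def using borel_measurable_continuous_onI[of f] by measurable

lemma vague_test_comp_continuous:
  assumes f: "vague_test f" and g: "continuous_on UNIV g" "g (\<lambda>_. 0) = (\<lambda>_. 0)"
  shows "vague_test (\<lambda>x. f (g x))"
proof -
  obtain U where U: "open U" "(\<lambda>_. 0) \<in> U" "\<forall>x\<in>U. f x = 0"
    using f by (auto simp: vague_test_def)
  have "continuous_on UNIV (\<lambda>x. f (g x))"
    using f g(1) continuous_on_compose2[of UNIV f UNIV g] by (simp add: vague_test_def)
  moreover have "open (g -` U)"
    using U(1) g(1) by (rule open_vimage)
  ultimately show ?thesis
    using f U(2,3) g(2) unfolding vague_test_def by (intro conjI exI[of _ "g -` U"]) auto
qed

definition ramp :: "real \<Rightarrow> ennreal \<Rightarrow> real" where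
  "ramp c s = max 0 ((2 / c) * enn2real (min s (ennreal c)) - 1)"

definition cutoff :: "real \<Rightarrow> ('p::finite \<Rightarrow> ennreal) \<Rightarrow> real" where
  "cutoff c x = min 1 (\<Sum>i\<in>UNIV. ramp c (x i))"

lemma continuous_on_ramp: "continuous_on UNIV (ramp c)"
proof -
  have "isCont (\<lambda>s. enn2real (min s (ennreal c))) s" for s
  proof -
    have "((\<lambda>s. min s (ennreal c)) \<longlongrightarrow> min s (ennreal c)) (at s)"
      by (intro tendsto_min tendsto_ident_at tendsto_const)
    moreover have "min s (ennreal c) = ennreal (enn2real (min s (ennreal c)))"
      by (metis ennreal_enn2real_if ennreal_less_top min.strict_coboundedI2 top.not_eq_extremum)
    ultimately have "((\<lambda>s. min s (ennreal c)) \<longlongrightarrow> ennreal (enn2real (min s (ennreal c)))) (at s)"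
      by simp
    then show ?thesis
      unfolding isCont_def by (rule tendsto_enn2real) simp
  qed
  then show ?thesis
    unfolding ramp_def[abs_def] by (intro continuous_intros continuous_at_imp_continuous_on) auto
qed

lemma ramp_eq_one: "c > 0 \<Longrightarrow> ennreal c \<le> s \<Longrightarrow> ramp c s = 1"
  by (simp add: ramp_def min_absorb2)

lemma ramp_eq_zero:
  assumes "c > 0" "s \<le> ennreal (c / 2)"
  shows "ramp c s = 0"
proof -
  have "enn2real (min s (ennreal c)) \<le> c / 2"
    using assms by (intro enn2real_leI) (auto simp: min.coboundedI1)
  then show ?thesis
    using assms by (simp add: ramp_def field_simps)
qed

lemma cutoff_nonneg: "0 \<le> cutoff c x"
  by (simp add: cutoff_def ramp_def sum_nonneg)

lemma cutoff_le_one: "cutoff c x \<le> 1"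
  by (simp add: cutoff_def)

lemma cutoff_eq_one:
  assumes "c > 0" "ennreal c \<le> x i"
  shows "cutoff c x = 1"
proof -
  have "ramp c (x i) \<le> (\<Sum>j\<in>UNIV. ramp c (x j))"
    by (rule member_le_sum) (auto simp: ramp_def)
  then show ?thesis
    using ramp_eq_one[OF assms] by (simp add: cutoff_def)
qed

lemma cutoff_eq_zero: "c > 0 \<Longrightarrow> (\<And>i. x i \<le> ennreal (c / 2)) \<Longrightarrow> cutoff c x = 0"
  by (simp add: cutoff_def ramp_eq_zero)

lemma vague_test_cutoff:
  assumes "c > 0"
  shows "vague_test (cutoff c :: ('p::finite \<Rightarrow> ennreal) \<Rightarrow> real)"
  unfolding vague_test_def
proof (intro conjI allI exI)
  show "continuous_on UNIV (cutoff c :: ('p \<Rightarrow> ennreal) \<Rightarrow> real)"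
    unfolding cutoff_def[abs_def]
    by (intro continuous_intros continuous_on_compose2[OF continuous_on_ramp
          continuous_on_product_coordinates]) auto
  show "open {x::'p \<Rightarrow> ennreal. \<forall>i. x i < ennreal (c / 2)}"
    by (rule open_coordinatewise_less)
  show "\<forall>x\<in>{x. \<forall>i. x i < ennreal (c / 2)}. cutoff c x = 0"
    using assms by (auto intro!: cutoff_eq_zero less_imp_le)
qed (use assms in \<open>auto simp: cutoff_nonneg\<close>)

lemma nn_integral_cutoff_finite:
  fixes \<nu> :: "('p::finite \<Rightarrow> ennreal) measure"
  assumes \<nu>: "radon_E \<nu>" and c: "c > 0"
  shows "(\<integral>\<^sup>+ x. ennreal (cutoff c x) \<partial>\<nu>) < \<infinity>"
proof -
  define K where "K = {x::'p \<Rightarrow> ennreal. \<exists>i. ennreal (c / 2) \<le> x i}"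
  have "closed K"
    unfolding K_def by (rule closed_coordinatewise_ge)
  then have "compact K" "K \<in> sets \<nu>"
    using compact_Int_closed[OF compact_UNIV_ennreal_fun] \<nu> by (auto simp: radon_E_def)
  moreover have "(\<lambda>_. 0) \<notin> K"
    using c by (simp add: K_def)
  ultimately have "emeasure \<nu> K < \<infinity>"
    using \<nu> by (simp add: radon_E_def)
  moreover have "ennreal (cutoff c x) \<le> indicator K x" for x
    using c cutoff_le_one[of c x] cutoff_eq_zero[of c x]
    by (cases "x \<in> K") (auto simp: K_def not_le less_imp_le)
  then have "(\<integral>\<^sup>+ x. ennreal (cutoff c x) \<partial>\<nu>) \<le> emeasure \<nu> K"
    using \<open>K \<in> sets \<nu>\<close> nn_integral_mono[of \<nu> "\<lambda>x. ennreal (cutoff c x)" "indicator K"]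
    by simp
  ultimately show ?thesis by simp
qed

lemma nn_integral_scale_distr:
  assumes "g \<in> measurable M N" "f \<in> borel_measurable N"
  shows "(\<integral>\<^sup>+ x. f x \<partial>(scale_measure r (distr M N g))) = r * (\<integral>\<^sup>+ \<omega>. f (g \<omega>) \<partial>M)"
  using assms by (simp add: nn_integral_scale_measure nn_integral_distr)

lemma radon_E_scale_measure:
  assumes "radon_E \<nu>" "r < \<infinity>"
  shows "radon_E (scale_measure r \<nu>)"
  using assms by (simp add: radon_E_def ennreal_mult_less_top)

lemma continuous_on_scale_ennreal_fun:
  "continuous_on UNIV (\<lambda>x::'p::finite \<Rightarrow> ennreal. \<lambda>i. ennreal a * x i)"
  by (intro continuous_on_coordinatewise_then_product ennreal_continuous_on_cmult
      continuous_on_product_coordinates) simp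

lemma distr_scale_homogeneous:
  fixes \<nu> :: "('p::finite \<Rightarrow> ennreal) measure"
  assumes a: "a > 0" and sets: "sets \<nu> = sets borel"
    and hom: "\<forall>t>0. \<forall>A\<in>sets borel. emeasure \<nu> ((\<lambda>x. \<lambda>i. ennreal t * x i) ` A) = ennreal (t powr (-\<alpha>)) * emeasure \<nu> A"
  shows "distr \<nu> borel (\<lambda>x i. ennreal a * x i) = scale_measure (ennreal (a powr \<alpha>)) \<nu>"
proof (rule measure_eqI)
  fix A assume "A \<in> sets (distr \<nu> borel (\<lambda>x i. ennreal a * x i))"
  then have A: "A \<in> sets borel" by simp
  have meas: "(\<lambda>x::'p \<Rightarrow> ennreal. \<lambda>i. ennreal a * x i) \<in> measurable \<nu> borel"
    using borel_measurable_continuous_onI[OF continuous_on_scale_ennreal_fun]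
      measurable_cong_sets[OF sets refl] by blast
  have cancel: "ennreal (1 / a) * (ennreal a * s) = s" "ennreal a * (ennreal (1 / a) * s) = s" for s
    using a by (simp_all add: mult.assoc[symmetric] ennreal_mult[symmetric])
  have "(\<lambda>x i. ennreal a * x i) -` A \<inter> space \<nu> = (\<lambda>x i. ennreal (1 / a) * x i) ` A"
  proof safe
    fix y assume "(\<lambda>i. ennreal a * y i) \<in> A"
    then show "y \<in> (\<lambda>x i. ennreal (1 / a) * x i) ` A"
      by (rule rev_image_eqI) (simp add: cancel)
  qed (auto simp: cancel sets_eq_imp_space_eq[OF sets])
  then have "emeasure (distr \<nu> borel (\<lambda>x i. ennreal a * x i)) A
      = emeasure \<nu> ((\<lambda>x i. ennreal (1 / a) * x i) ` A)"
    using meas A by (simp add: emeasure_distr)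
  also have "\<dots> = ennreal ((1 / a) powr (-\<alpha>)) * emeasure \<nu> A"
    using hom a A by simp
  also have "(1 / a) powr (-\<alpha>) = a powr \<alpha>"
    using a by (simp add: powr_minus powr_divide)
  finally show "emeasure (distr \<nu> borel (\<lambda>x i. ennreal a * x i)) A =
      emeasure (scale_measure (ennreal (a powr \<alpha>)) \<nu>) A"
    by simp
qed (use sets in simp)

lemma vague_conv_scaled_distr_comp:
  fixes Z :: "nat \<Rightarrow> 'a \<Rightarrow> 'p::finite \<Rightarrow> ennreal" and g :: "('p \<Rightarrow> ennreal) \<Rightarrow> ('p \<Rightarrow> ennreal)"
  assumes Z: "\<And>n. Z n \<in> borel_measurable M"
    and conv: "vague_conv (\<lambda>n. scale_measure (r n) (distr M borel (Z n))) \<nu>"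
    and g: "continuous_on UNIV g" "g (\<lambda>_. 0) = (\<lambda>_. 0)" and sets: "sets \<nu> = sets borel"
  shows "vague_conv (\<lambda>n. scale_measure (r n) (distr M borel (\<lambda>\<omega>. g (Z n \<omega>)))) (distr \<nu> borel g)"
  unfolding vague_conv_iff_vague_test
proof (intro allI impI)
  fix f :: "('p \<Rightarrow> ennreal) \<Rightarrow> real" assume f: "vague_test f"
  have gm: "g \<in> borel_measurable borel" "g \<in> measurable \<nu> borel"
    using borel_measurable_continuous_onI[OF g(1)] measurable_cong_sets[OF sets refl] by auto
  have fg: "vague_test (\<lambda>x. f (g x))"
    using f g by (rule vague_test_comp_continuous)
  have "(\<lambda>n. \<integral>\<^sup>+ x. ennreal (f (g x)) \<partial>scale_measure (r n) (distr M borel (Z n)))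
      \<longlonglongrightarrow> (\<integral>\<^sup>+ x. ennreal (f (g x)) \<partial>\<nu>)"
    using conv fg by (simp add: vague_conv_iff_vague_test)
  moreover have "(\<integral>\<^sup>+ x. ennreal (f x) \<partial>scale_measure (r n) (distr M borel (\<lambda>\<omega>. g (Z n \<omega>))))
      = (\<integral>\<^sup>+ x. ennreal (f (g x)) \<partial>scale_measure (r n) (distr M borel (Z n)))" for n
    using Z gm borel_measurable_vague_test[OF f] borel_measurable_vague_test[OF fg]
    by (simp add: nn_integral_scale_distr)
  moreover have "(\<integral>\<^sup>+ x. ennreal (f x) \<partial>distr \<nu> borel g) = (\<integral>\<^sup>+ x. ennreal (f (g x)) \<partial>\<nu>)"
    using gm borel_measurable_vague_test[OF f] by (simp add: nn_integral_distr)
  ultimately show "(\<lambda>n. \<integral>\<^sup>+ x. ennreal (f x) \<partial>scale_measure (r n) (distr M borel (\<lambda>\<omega>. g (Z n \<omega>))))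
      \<longlonglongrightarrow> (\<integral>\<^sup>+ x. ennreal (f x) \<partial>distr \<nu> borel g)"
    by simp
qed

lemma vague_conv_null_measureI:
  fixes \<mu> :: "nat \<Rightarrow> ('p::finite \<Rightarrow> ennreal) measure"
  assumes sets: "\<And>n. sets (\<mu> n) = sets borel"
    and small: "\<And>d. d > 0 \<Longrightarrow> (\<lambda>n. emeasure (\<mu> n) {x. \<exists>i. ennreal d \<le> x i}) \<longlonglongrightarrow> 0"
  shows "vague_conv \<mu> (null_measure borel)"
  unfolding vague_conv_iff_vague_test
proof (intro allI impI)
  fix f :: "('p \<Rightarrow> ennreal) \<Rightarrow> real" assume f: "vague_test f"
  obtain d where d: "d > 0" "\<And>x. (\<forall>i. x i < ennreal d) \<Longrightarrow> f x = 0"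
    using vague_test_vanishes_on_box[OF f] by blast
  obtain B where B: "\<And>x. f x \<le> B"
    using vague_test_bounded[OF f] by blast
  define K where "K = {x::'p \<Rightarrow> ennreal. \<exists>i. ennreal d \<le> x i}"
  have K: "K \<in> sets (\<mu> n)" for n
    using sets closed_coordinatewise_ge by (simp add: K_def)
  have "ennreal (f x) \<le> ennreal B * indicator K x" for x
    using d(2)[of x] B[of x] by (cases "x \<in> K") (auto simp: K_def not_le ennreal_leI)
  then have le: "(\<integral>\<^sup>+ x. ennreal (f x) \<partial>\<mu> n) \<le> ennreal B * emeasure (\<mu> n) K" for n
    using nn_integral_mono[of "\<mu> n" "\<lambda>x. ennreal (f x)" "\<lambda>x. ennreal B * indicator K x"] K[of n]
    by (simp add: nn_integral_cmult_indicator)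
  have "(\<lambda>n. ennreal B * emeasure (\<mu> n) K) \<longlonglongrightarrow> ennreal B * 0"
    using small[OF d(1)] unfolding K_def by (intro ennreal_tendsto_cmult) auto
  then have bound: "(\<lambda>n. ennreal B * emeasure (\<mu> n) K) \<longlonglongrightarrow> 0"
    by simp
  have "(\<lambda>n. \<integral>\<^sup>+ x. ennreal (f x) \<partial>\<mu> n) \<longlonglongrightarrow> 0"
    by (rule tendsto_sandwich[OF _ _ tendsto_const bound]) (simp_all add: le)
  then show "(\<lambda>n. \<integral>\<^sup>+ x. ennreal (f x) \<partial>\<mu> n) \<longlonglongrightarrow> (\<integral>\<^sup>+ x. ennreal (f x) \<partial>null_measure borel)"
    by simp
qed

lemma nn_integral_scale_distr_le_add:
  fixes F G :: "'b \<Rightarrow> ennreal"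
  assumes Y: "Y \<in> measurable M N" and Z: "Z \<in> measurable M N" and W: "W \<in> measurable M N"
    and F: "F \<in> borel_measurable N" and G: "G \<in> borel_measurable N"
    and le: "\<And>\<omega>. \<omega> \<in> space M \<Longrightarrow> F (Y \<omega>) \<le> F (Z \<omega>) + c * G (W \<omega>)"
  shows "(\<integral>\<^sup>+ x. F x \<partial>scale_measure r (distr M N Y))
      \<le> (\<integral>\<^sup>+ x. F x \<partial>scale_measure r (distr M N Z)) + c * (\<integral>\<^sup>+ x. G x \<partial>scale_measure r (distr M N W))"
proof -
  have "(\<integral>\<^sup>+ \<omega>. F (Y \<omega>) \<partial>M) \<le> (\<integral>\<^sup>+ \<omega>. F (Z \<omega>) + c * G (W \<omega>) \<partial>M)"
    using le by (intro nn_integral_mono) auto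
  also have "\<dots> = (\<integral>\<^sup>+ \<omega>. F (Z \<omega>) \<partial>M) + c * (\<integral>\<^sup>+ \<omega>. G (W \<omega>) \<partial>M)"
    using Z W F G by (simp add: nn_integral_add nn_integral_cmult)
  finally have "r * (\<integral>\<^sup>+ \<omega>. F (Y \<omega>) \<partial>M) \<le> r * ((\<integral>\<^sup>+ \<omega>. F (Z \<omega>) \<partial>M) + c * (\<integral>\<^sup>+ \<omega>. G (W \<omega>) \<partial>M))"
    by (rule mult_left_mono) simp
  then show ?thesis
    using Y Z W F G by (simp add: nn_integral_scale_distr distrib_left mult.left_commute)
qed

lemma vague_test_diff_le_cutoff:
  fixes f :: "('p::finite \<Rightarrow> ennreal) \<Rightarrow> real"
  assumes d: "d > 0" "\<And>x. (\<forall>i. x i < ennreal d) \<Longrightarrow> f x = 0"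
    and uc: "\<And>x y. coord_close h x y \<Longrightarrow> \<bar>f x - f y\<bar> < e"
    and close: "coord_close h y z" and h: "0 < h" "h \<le> d / 2"
  shows "\<bar>f y - f z\<bar> \<le> e * cutoff (d / 2) z"
proof (cases "\<forall>i. z i < ennreal (d / 2)")
  case True
  have "y i < ennreal d" for i
  proof -
    obtain zr where zr: "z i = ennreal zr" "0 \<le> zr" "zr < d / 2"
      using True[rule_format, of i] by (cases "z i") (auto simp: ennreal_less_iff)
    have "y i \<le> z i + ennreal h"
      using close by (simp add: coord_close_def)
    also have "\<dots> = ennreal zr + ennreal h"
      using zr by simp
    also have "\<dots> = ennreal (zr + h)"
      using zr h by (simp add: ennreal_plus)
    also have "\<dots> < ennreal d"
      using zr h d by (intro ennreal_lessI) auto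
    finally show ?thesis .
  qed
  moreover have "z i < ennreal d" for i
  proof -
    have "ennreal (d / 2) \<le> ennreal d" using d by (intro ennreal_leI) simp
    then show ?thesis using True less_le_trans by blast
  qed
  moreover have "0 \<le> e"
    using uc[of z z] by (simp add: coord_close_def)
  ultimately show ?thesis
    using d cutoff_nonneg[of "d / 2" z] by simp
next
  case False
  then obtain i where "ennreal (d / 2) \<le> z i" by (auto simp: not_less)
  then have "cutoff (d / 2) z = 1"
    using d by (intro cutoff_eq_one) auto
  then show ?thesis
    using uc[OF close] by simp
qed

lemma nn_integral_scale_distr_close:
  fixes f :: "('p::finite \<Rightarrow> ennreal) \<Rightarrow> real" and Y Z :: "'a \<Rightarrow> 'p \<Rightarrow> ennreal"
  assumes f: "vague_test f" and d: "d > 0" "\<And>x. (\<forall>i. x i < ennreal d) \<Longrightarrow> f x = 0"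
    and uc: "\<And>x y. coord_close h x y \<Longrightarrow> \<bar>f x - f y\<bar> < e" and h: "0 < h" "h \<le> d / 2"
    and Y: "Y \<in> borel_measurable M" and Z: "Z \<in> borel_measurable M"
    and close: "\<forall>\<omega>\<in>space M. coord_close h (Y \<omega>) (Z \<omega>)"
  shows "(\<integral>\<^sup>+ x. f x \<partial>scale_measure r (distr M borel Y)) \<le> (\<integral>\<^sup>+ x. f x \<partial>scale_measure r (distr M borel Z))
      + ennreal e * (\<integral>\<^sup>+ x. cutoff (d / 2) x \<partial>scale_measure r (distr M borel Z))"
    and "(\<integral>\<^sup>+ x. f x \<partial>scale_measure r (distr M borel Z)) \<le> (\<integral>\<^sup>+ x. f x \<partial>scale_measure r (distr M borel Y))
      + ennreal e * (\<integral>\<^sup>+ x. cutoff (d / 2) x \<partial>scale_measure r (distr M borel Z))"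
proof -
  have meas: "(\<lambda>x. ennreal (f x)) \<in> borel_measurable borel"
    "(\<lambda>x. ennreal (cutoff (d / 2) x)) \<in> borel_measurable borel"
    using borel_measurable_vague_test f vague_test_cutoff[of "d / 2"] d by auto
  have "\<bar>f (Y \<omega>) - f (Z \<omega>)\<bar> \<le> e * cutoff (d / 2) (Z \<omega>)" if "\<omega> \<in> space M" for \<omega>
    using vague_test_diff_le_cutoff[where f = f, OF d uc _ h] close that by blast
  moreover have "0 \<le> f x" "0 \<le> cutoff (d / 2) x" for x
    using f cutoff_nonneg by (auto simp: vague_test_def)
  moreover have "0 \<le> e"
    using uc[of "Z \<omega>" "Z \<omega>" for \<omega>] by (simp add: coord_close_def)
  ultimately have "ennreal (f (Y \<omega>)) \<le> ennreal (f (Z \<omega>)) + ennreal e * ennreal (cutoff (d / 2) (Z \<omega>))"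
    "ennreal (f (Z \<omega>)) \<le> ennreal (f (Y \<omega>)) + ennreal e * ennreal (cutoff (d / 2) (Z \<omega>))"
    if "\<omega> \<in> space M" for \<omega>
    using that ennreal_le_add_of_abs_diff_le ennreal_mult
    by (metis abs_minus_commute mult_nonneg_nonneg)+
  then show "(\<integral>\<^sup>+ x. f x \<partial>scale_measure r (distr M borel Y)) \<le> (\<integral>\<^sup>+ x. f x \<partial>scale_measure r (distr M borel Z))
      + ennreal e * (\<integral>\<^sup>+ x. cutoff (d / 2) x \<partial>scale_measure r (distr M borel Z))"
    and "(\<integral>\<^sup>+ x. f x \<partial>scale_measure r (distr M borel Z)) \<le> (\<integral>\<^sup>+ x. f x \<partial>scale_measure r (distr M borel Y))
      + ennreal e * (\<integral>\<^sup>+ x. cutoff (d / 2) x \<partial>scale_measure r (distr M borel Z))"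
    using Y Z meas by (auto intro: nn_integral_scale_distr_le_add)
qed

lemma vague_conv_cutoff_bounded:
  assumes conv: "vague_conv \<mu> \<nu>" and \<nu>: "radon_E \<nu>" and c: "c > 0"
  obtains K where "K > 0" "eventually (\<lambda>n. (\<integral>\<^sup>+ x. cutoff c x \<partial>\<mu> n) < ennreal K) sequentially"
proof -
  define G where "G = (\<integral>\<^sup>+ x. cutoff c x \<partial>\<nu>)"
  have "(\<lambda>n. \<integral>\<^sup>+ x. cutoff c x \<partial>\<mu> n) \<longlonglongrightarrow> G"
    using conv vague_test_cutoff[OF c] unfolding vague_conv_iff_vague_test G_def by blast
  moreover have "G < ennreal (enn2real G + 1)"
    using nn_integral_cutoff_finite[OF \<nu> c] by (cases G) (auto simp: G_def ennreal_less_iff)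
  ultimately have "eventually (\<lambda>n. (\<integral>\<^sup>+ x. cutoff c x \<partial>\<mu> n) < ennreal (enn2real G + 1)) sequentially"
    by (rule order_tendstoD(2))
  then show ?thesis
    using that[of "enn2real G + 1"] add_nonneg_pos[OF enn2real_nonneg zero_less_one] by blast
qed

lemma vague_conv_scaled_distr_close:
  fixes Y Z :: "nat \<Rightarrow> 'a \<Rightarrow> 'p::finite \<Rightarrow> ennreal"
  assumes Y: "\<And>n. Y n \<in> borel_measurable M" and Z: "\<And>n. Z n \<in> borel_measurable M"
    and conv: "vague_conv (\<lambda>n. scale_measure (r n) (distr M borel (Z n))) \<nu>" and \<nu>: "radon_E \<nu>"
    and close: "\<And>h. h > 0 \<Longrightarrow> eventually (\<lambda>n. \<forall>\<omega>\<in>space M. coord_close h (Y n \<omega>) (Z n \<omega>)) sequentially"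
  shows "vague_conv (\<lambda>n. scale_measure (r n) (distr M borel (Y n))) \<nu>"
  unfolding vague_conv_iff_vague_test
proof (intro allI impI)
  fix f :: "('p \<Rightarrow> ennreal) \<Rightarrow> real" assume f: "vague_test f"
  obtain d where d: "d > 0" "\<And>x. (\<forall>i. x i < ennreal d) \<Longrightarrow> f x = 0"
    using vague_test_vanishes_on_box[OF f] by blast
  define \<mu>Y where "\<mu>Y n = scale_measure (r n) (distr M borel (Y n))" for n
  define \<mu>Z where "\<mu>Z n = scale_measure (r n) (distr M borel (Z n))" for n
  obtain K where K: "K > 0" "eventually (\<lambda>n. (\<integral>\<^sup>+ x. cutoff (d / 2) x \<partial>\<mu>Z n) < ennreal K) sequentially"
    using vague_conv_cutoff_bounded[OF conv \<nu>, of "d / 2"] d by (auto simp: \<mu>Z_def)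
  have "(\<lambda>n. \<integral>\<^sup>+ x. f x \<partial>\<mu>Z n) \<longlonglongrightarrow> (\<integral>\<^sup>+ x. f x \<partial>\<nu>)"
    using conv f by (simp add: vague_conv_iff_vague_test \<mu>Z_def)
  then have "(\<lambda>n. \<integral>\<^sup>+ x. f x \<partial>\<mu>Y n) \<longlonglongrightarrow> (\<integral>\<^sup>+ x. f x \<partial>\<nu>)"
  proof (rule tendsto_ennreal_approx)
    fix e :: real assume e: "e > 0"
    obtain h where h: "h > 0" "\<And>x y. coord_close h x y \<Longrightarrow> \<bar>f x - f y\<bar> < e / K"
      using continuous_on_ennreal_fun_uniform[of f "e / K"] f e K(1)
      by (auto simp: vague_test_def)
    define h' where "h' = min h (d / 2)"
    have h': "h' > 0" "h' \<le> d / 2"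
      using h d by (simp_all add: h'_def)
    have uc: "\<bar>f x - f y\<bar> < e / K" if "coord_close h' x y" for x y
      using h(2) coord_close_mono[OF that] by (simp add: h'_def)
    show "eventually (\<lambda>n. (\<integral>\<^sup>+ x. f x \<partial>\<mu>Y n) \<le> (\<integral>\<^sup>+ x. f x \<partial>\<mu>Z n) + ennreal e
        \<and> (\<integral>\<^sup>+ x. f x \<partial>\<mu>Z n) \<le> (\<integral>\<^sup>+ x. f x \<partial>\<mu>Y n) + ennreal e) sequentially"
      using close[OF h'(1)] K(2)
    proof eventually_elim
      case (elim n)
      have "ennreal (e / K) * (\<integral>\<^sup>+ x. cutoff (d / 2) x \<partial>\<mu>Z n) \<le> ennreal (e / K) * ennreal K"
        using elim by (intro mult_left_mono) auto
      also have "\<dots> = ennreal e"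
        using e K(1) by (simp add: ennreal_mult[symmetric])
      finally show ?case
        using nn_integral_scale_distr_close[OF f d uc h' Y Z elim(1), of "r n"] unfolding \<mu>Y_def \<mu>Z_def
        by (meson add_left_mono order_trans)
    qed
  qed
  then show "(\<lambda>n. \<integral>\<^sup>+ x. f x \<partial>scale_measure (r n) (distr M borel (Y n))) \<longlonglongrightarrow> (\<integral>\<^sup>+ x. f x \<partial>\<nu>)"
    by (simp add: \<mu>Y_def)
qed

lemma borel_measurable_tinv [measurable]: "tinv \<in> borel_measurable borel"
  unfolding tinv_def by measurable

lemma borel_measurable_tfun [measurable]: "tfun \<in> borel_measurable borel"
proof -
  have eq: "tfun = (\<lambda>y. if y = \<infinity> then \<infinity> else if y = -\<infinity> then 0 else ennreal (ln (1 + exp (real_of_ereal y))))"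
    by (auto simp: fun_eq_iff tfun_def split: ereal.split)
  show ?thesis
    unfolding eq by measurable
qed

lemma borel_measurable_coordinate:
  fixes X :: "'a \<Rightarrow> 'p::finite \<Rightarrow> 'b::topological_space"
  assumes "X \<in> borel_measurable M"
  shows "(\<lambda>\<omega>. X \<omega> i) \<in> borel_measurable M"
  by (rule measurable_compose[OF assms borel_measurable_continuous_onI]) simp

lemma borel_measurable_scalev_tcirc:
  fixes X :: "'a \<Rightarrow> 'p::finite \<Rightarrow> real"
  assumes "X \<in> borel_measurable M"
  shows "(\<lambda>\<omega>. scalev c (tcirc a (X \<omega>))) \<in> borel_measurable M"
  unfolding scalev_def tcirc_def
proof (rule measurable_coordinatewise_then_product)
  fix i
  have [measurable]: "(\<lambda>\<omega>. X \<omega> i) \<in> borel_measurable M"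
    using assms by (rule borel_measurable_coordinate)
  show "(\<lambda>\<omega>. tfun (ereal a * tinv (X \<omega> i)) / ennreal c) \<in> borel_measurable M"
    by measurable
qed

lemma borel_measurable_scalev_emb:
  fixes X :: "'a \<Rightarrow> 'p::finite \<Rightarrow> real"
  assumes "X \<in> borel_measurable M"
  shows "(\<lambda>\<omega>. scalev c (emb (X \<omega>))) \<in> borel_measurable M"
  unfolding scalev_def emb_def
proof (rule measurable_coordinatewise_then_product)
  fix i
  have [measurable]: "(\<lambda>\<omega>. X \<omega> i) \<in> borel_measurable M"
    using assms by (rule borel_measurable_coordinate)
  show "(\<lambda>\<omega>. ennreal (X \<omega> i) / ennreal c) \<in> borel_measurable M"
    by measurable
qed

lemma ln_one_plus_exp_bounds:
  fixes y :: real
  shows "max 0 y \<le> ln (1 + exp y)" "ln (1 + exp y) \<le> max 0 y + ln 2"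
proof -
  have "y \<le> ln (1 + exp y)"
    using ln_le_cancel_iff[of "exp y" "1 + exp y"] by (simp add: add_pos_pos)
  then show "max 0 y \<le> ln (1 + exp y)"
    by (simp add: ln_ge_zero add_nonneg_nonneg)
  have "1 + exp y \<le> 2 * exp (max 0 y)"
    by (cases "y \<le> 0") (auto simp: max_def)
  then have "ln (1 + exp y) \<le> ln (2 * exp (max 0 y))"
    by (simp add: add_pos_pos)
  then show "ln (1 + exp y) \<le> max 0 y + ln 2"
    by (simp add: ln_mult)
qed

lemma ln_exp_minus_one_bounds:
  fixes x :: real
  assumes "x > 0"
  shows "ln (exp x - 1) < x" "ln 2 \<le> x \<Longrightarrow> x - ln 2 \<le> ln (exp x - 1)"
proof -
  have pos: "exp x - 1 > 0" using assms by simp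
  have "exp (ln (exp x - 1)) < exp x"
    using pos by simp
  then show "ln (exp x - 1) < x"
    by (simp only: exp_less_cancel_iff)
  assume "ln 2 \<le> x"
  then have "2 \<le> exp x"
    by (metis exp_le_cancel_iff exp_ln zero_less_numeral)
  then have "exp x / 2 \<le> exp x - 1" by simp
  then have "ln (exp x / 2) \<le> ln (exp x - 1)"
    using pos by simp
  then show "x - ln 2 \<le> ln (exp x - 1)"
    by (simp add: ln_div)
qed

text \<open>The coordinate of \<open>tcirc a\<close> for \<open>a > 0\<close>; at \<open>x = 0\<close> we have \<open>tinv 0 = -\<infinity>\<close> and \<open>tfun (-\<infinity>) = 0\<close>.\<close>

definition tcirc_real :: "real \<Rightarrow> real \<Rightarrow> real" where
  "tcirc_real a x = (if x = 0 then 0 else ln (1 + exp (a * ln (exp x - 1))))"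

lemma tfun_tinv_pos:
  assumes "a > 0" "x \<ge> 0"
  shows "tfun (ereal a * tinv x) = ennreal (tcirc_real a x)"
  using assms by (auto simp: tfun_def tinv_def tcirc_real_def)

lemma tfun_tinv_zero: "tfun (ereal 0 * tinv x) = ennreal (ln 2)"
proof -
  have "ereal 0 * tinv x = ereal 0"
    by (simp add: zero_ereal_def[symmetric])
  then show ?thesis
    by (simp add: tfun_def)
qed

lemma tcirc_real_nonneg: "0 \<le> tcirc_real a x"
  unfolding tcirc_real_def by (auto intro!: ln_ge_zero simp: add_increasing2)

lemma tcirc_real_approx:
  assumes a: "a > 0" and x: "x \<ge> 0"
  shows "\<bar>tcirc_real a x - a * x\<bar> \<le> (a + 1) * ln 2"
proof (cases "x = 0")
  case True
  then show ?thesis using a by (simp add: tcirc_real_def)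
next
  case False
  then have x: "x > 0" using x by simp
  define s where "s = ln (exp x - 1)"
  have T: "tcirc_real a x = ln (1 + exp (a * s))"
    using x by (simp add: tcirc_real_def s_def)
  have "a * s \<le> a * x"
    using ln_exp_minus_one_bounds(1)[OF x] a by (simp add: s_def)
  then have "max 0 (a * s) \<le> a * x"
    using a x by simp
  then have upper: "tcirc_real a x \<le> a * x + ln 2"
    using ln_one_plus_exp_bounds(2)[of "a * s"] T by linarith
  have lower: "a * x - a * ln 2 \<le> tcirc_real a x"
  proof (cases "ln 2 \<le> x")
    case True
    then have "a * (x - ln 2) \<le> a * s"
      using ln_exp_minus_one_bounds(2)[OF x] a by (simp add: s_def)
    then show ?thesis
      using ln_one_plus_exp_bounds(1)[of "a * s"] T by (simp add: algebra_simps)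
  next
    case False
    then have "a * x - a * ln 2 \<le> 0"
      using a by (simp add: mult_left_mono)
    then show ?thesis
      using tcirc_real_nonneg[of a x] by linarith
  qed
  have "0 \<le> a * ln 2" "0 \<le> ln (2::real)"
    using a by simp_all
  then show ?thesis
    using upper lower unfolding abs_le_iff distrib_right by linarith
qed

lemma tfun_tinv_neg_large:
  assumes a: "a < 0" and x: "x \<ge> 0" and B: "B \<ge> 2" and ge: "ennreal B \<le> tfun (ereal a * tinv x)"
  shows "x \<le> exp (- (B / (2 * (- a))))"
proof (cases "x = 0")
  case False
  then have x: "x > 0" using x by simp
  define s where "s = ln (exp x - 1)"
  have "tfun (ereal a * tinv x) = ennreal (ln (1 + exp (a * s)))"
    using x by (simp add: tfun_def tinv_def s_def)
  then have "B \<le> ln (1 + exp (a * s))"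
    using ge B by (simp add: ennreal_le_iff2)
  then have "B / 2 \<le> a * s"
    using ln_one_plus_exp_bounds(2)[of "a * s"] ln_2_less_1 B by (simp add: max_def split: if_splits)
  then have s_le: "s \<le> - (B / (2 * (- a)))"
    using a by (simp add: field_simps)
  have "exp s = exp x - 1"
    using x by (simp add: s_def)
  then have "x = ln (1 + exp s)" by simp
  also have "\<dots> \<le> exp s"
    using ln_add_one_self_le_self[of "exp s"] by simp
  also have "\<dots> \<le> exp (- (B / (2 * (- a))))"
    using s_le by simp
  finally show ?thesis .
qed simp

lemma coord_close_scalev_tcirc:
  assumes a: "a > 0" and x: "\<And>i. 0 \<le> x i" and c: "c > 0" and h: "(a + 1) * ln 2 \<le> h * c"
  shows "coord_close h (scalev c (tcirc a x)) (\<lambda>i. ennreal a * scalev c (emb x) i)"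
  unfolding coord_close_def
proof
  fix i
  have T: "scalev c (tcirc a x) i = ennreal (tcirc_real a (x i) / c)"
    using tfun_tinv_pos[OF a x] tcirc_real_nonneg c by (simp add: scalev_def tcirc_def divide_ennreal)
  have L: "ennreal a * scalev c (emb x) i = ennreal (a * x i / c)"
    using a x[of i] c by (simp add: scalev_def emb_def divide_ennreal ennreal_mult[symmetric])
  have "\<bar>tcirc_real a (x i) / c - a * x i / c\<bar> = \<bar>tcirc_real a (x i) - a * x i\<bar> / c"
    using c by (simp add: diff_divide_distrib[symmetric] abs_divide)
  also have "\<dots> \<le> (a + 1) * ln 2 / c"
    using tcirc_real_approx[OF a x[of i]] c by (simp add: divide_right_mono)
  also have "\<dots> \<le> h"
    using h c by (simp add: field_simps)
  finally have "\<bar>tcirc_real a (x i) / c - a * x i / c\<bar> \<le> h" .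
  moreover have "0 \<le> tcirc_real a (x i) / c" "0 \<le> a * x i / c"
    using tcirc_real_nonneg a x[of i] c by auto
  ultimately show "scalev c (tcirc a x) i \<le> ennreal a * scalev c (emb x) i + ennreal h
      \<and> ennreal a * scalev c (emb x) i \<le> scalev c (tcirc a x) i + ennreal h"
    unfolding T L by (auto intro!: ennreal_le_add_of_abs_diff_le simp: abs_minus_commute)
qed

lemma vague_conv_tcirc_pos:
  fixes X :: "'a \<Rightarrow> 'p::finite \<Rightarrow> real"
  assumes rv: "RV_plus \<alpha> M X b \<nu>" and a: "a > 0"
  shows "vague_conv (\<lambda>n. scale_measure (of_nat n) (distr M borel (\<lambda>\<omega>. scalev (b n) (tcirc a (X \<omega>)))))
      (scale_measure (ennreal (a powr \<alpha>)) \<nu>)"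
proof -
  have X: "X \<in> borel_measurable M" and Xnn: "\<And>\<omega> i. \<omega> \<in> space M \<Longrightarrow> 0 \<le> X \<omega> i"
    and b: "filterlim b at_top sequentially" and \<nu>: "radon_E \<nu>"
    and hom: "\<forall>t>0. \<forall>A\<in>sets borel. emeasure \<nu> ((\<lambda>x. \<lambda>i. ennreal t * x i) ` A) = ennreal (t powr (-\<alpha>)) * emeasure \<nu> A"
    and conv: "vague_conv (\<lambda>n. scale_measure (of_nat n) (distr M borel (\<lambda>\<omega>. scalev (b n) (emb (X \<omega>))))) \<nu>"
    using rv by (auto simp: RV_plus_def)
  define g :: "('p \<Rightarrow> ennreal) \<Rightarrow> ('p \<Rightarrow> ennreal)" where "g x = (\<lambda>i. ennreal a * x i)" for x
  have g: "continuous_on UNIV g" "g (\<lambda>_. 0) = (\<lambda>_. 0)"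
    using continuous_on_scale_ennreal_fun by (auto simp: g_def[abs_def])
  have "distr \<nu> borel g = scale_measure (ennreal (a powr \<alpha>)) \<nu>"
    using distr_scale_homogeneous[OF a _ hom] \<nu> by (simp add: radon_E_def g_def[abs_def])
  then have conv_g: "vague_conv (\<lambda>n. scale_measure (of_nat n) (distr M borel (\<lambda>\<omega>. g (scalev (b n) (emb (X \<omega>))))))
      (scale_measure (ennreal (a powr \<alpha>)) \<nu>)"
    using vague_conv_scaled_distr_comp[OF borel_measurable_scalev_emb[OF X] conv g] \<nu>
    by (simp add: radon_E_def)
  have close: "eventually (\<lambda>n. \<forall>\<omega>\<in>space M. coord_close h (scalev (b n) (tcirc a (X \<omega>)))
      (g (scalev (b n) (emb (X \<omega>))))) sequentially" if h: "h > 0" for h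
  proof -
    have "eventually (\<lambda>n. max 1 ((a + 1) * ln 2 / h) \<le> b n) sequentially"
      using b unfolding filterlim_at_top by blast
    then show ?thesis
    proof eventually_elim
      case (elim n)
      then have "0 < b n" "(a + 1) * ln 2 \<le> h * b n"
        using h by (auto simp: field_simps)
      then show ?case
        using a Xnn coord_close_scalev_tcirc[of a "X _" "b n" h] by (simp add: g_def)
    qed
  qed
  have "(\<lambda>\<omega>. g (scalev (b n) (emb (X \<omega>)))) \<in> borel_measurable M" for n
    using measurable_compose[OF borel_measurable_scalev_emb[OF X] borel_measurable_continuous_onI[OF g(1)]] .
  then show ?thesis
    using vague_conv_scaled_distr_close[OF borel_measurable_scalev_tcirc[OF X] _ conv_g
        radon_E_scale_measure[OF \<nu>] close] by simp
qed

lemma vague_conv_tcirc_nonpos: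
  fixes X :: "'a \<Rightarrow> 'p::finite \<Rightarrow> real"
  assumes rv: "RV_plus \<alpha> M X b \<nu>"
    and lower: "\<forall>k>0. \<forall>i. ((\<lambda>n. real n * measure M {\<omega> \<in> space M. X \<omega> i \<le> exp (- k * b n)})
                  \<longlongrightarrow> 0) sequentially"
    and a: "a \<le> 0"
  shows "vague_conv (\<lambda>n. scale_measure (of_nat n) (distr M borel (\<lambda>\<omega>. scalev (b n) (tcirc a (X \<omega>)))))
      (null_measure borel)"
proof (rule vague_conv_null_measureI)
  have X: "X \<in> borel_measurable M" and Xnn: "\<And>\<omega> i. \<omega> \<in> space M \<Longrightarrow> 0 \<le> X \<omega> i"
    and b: "filterlim b at_top sequentially" and "prob_space M"
    using rv by (auto simp: RV_plus_def)
  interpret prob_space M by fact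
  fix d :: real assume d: "d > 0"
  define Y where "Y n \<omega> = scalev (b n) (tcirc a (X \<omega>))" for n \<omega>
  define E where "E n = {\<omega> \<in> space M. \<exists>i. ennreal d \<le> Y n \<omega> i}" for n
  have Y: "Y n \<in> borel_measurable M" for n
    unfolding Y_def by (rule borel_measurable_scalev_tcirc[OF X])
  have "eventually (\<lambda>n. 2 / d < b n) sequentially"
    using b unfolding filterlim_at_top_dense by blast
  then have large: "eventually (\<lambda>n. 0 < b n \<and> 2 \<le> d * b n \<and> ln 2 / b n < d) sequentially"
  proof eventually_elim
    case (elim n)
    then have "0 < b n" "2 < d * b n"
      using d by (auto simp: field_simps intro: less_trans[of 0 "2 / d"])
    then show ?case
      using ln_2_less_1 by (auto simp: field_simps)
  qed
  have "(\<lambda>n. of_nat n * emeasure M (E n)) \<longlonglongrightarrow> 0"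
  proof (cases "a = 0")
    case True
    have "eventually (\<lambda>n. of_nat n * emeasure M (E n) = 0) sequentially"
      using large
    proof eventually_elim
      case (elim n)
      then have "ennreal (ln 2 / b n) < ennreal d"
        using d by (intro ennreal_lessI) auto
      then have "E n = {}"
        using elim by (auto simp: E_def Y_def scalev_def tcirc_def True tfun_tinv_zero divide_ennreal)
      then show ?case by simp
    qed
    then show ?thesis
      by (rule tendsto_eventually)
  next
    case False
    then have a: "a < 0" using a by simp
    define k where "k = d / (2 * - a)"
    have k: "k > 0" using a d by (simp add: k_def divide_pos_neg)
    define S where "S n i = {\<omega> \<in> space M. X \<omega> i \<le> exp (- k * b n)}" for n i
    have S: "S n i \<in> sets M" for n i
    proof -
      have [measurable]: "(\<lambda>\<omega>. X \<omega> i) \<in> borel_measurable M"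
        using X by (rule borel_measurable_coordinate)
      show ?thesis unfolding S_def by measurable
    qed
    have le: "eventually (\<lambda>n. of_nat n * emeasure M (E n) \<le> (\<Sum>i\<in>UNIV. ennreal (real n * measure M (S n i))))
        sequentially"
      using large
    proof eventually_elim
      case (elim n)
      have "E n \<subseteq> (\<Union>i. S n i)"
      proof
        fix \<omega> assume "\<omega> \<in> E n"
        then obtain i where \<omega>: "\<omega> \<in> space M" and "ennreal d \<le> tfun (ereal a * tinv (X \<omega> i)) / ennreal (b n)"
          by (auto simp: E_def Y_def scalev_def tcirc_def)
        then have "ennreal (d * b n) \<le> tfun (ereal a * tinv (X \<omega> i))"
          using divide_less_ennreal[of "ennreal (b n)" "tfun (ereal a * tinv (X \<omega> i))" "ennreal d"] elim d
          by (simp add: not_less[symmetric] ennreal_mult)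
        then have "X \<omega> i \<le> exp (- (d * b n / (2 * - a)))"
          using tfun_tinv_neg_large[OF a Xnn[OF \<omega>]] elim by blast
        then show "\<omega> \<in> (\<Union>i. S n i)"
          using \<omega> by (auto simp: S_def k_def)
      qed
      then have "emeasure M (E n) \<le> emeasure M (\<Union>i. S n i)"
        using S by (intro emeasure_mono) auto
      also have "\<dots> \<le> (\<Sum>i\<in>UNIV. emeasure M (S n i))"
        using S by (intro emeasure_subadditive_finite) auto
      finally have "of_nat n * emeasure M (E n) \<le> of_nat n * (\<Sum>i\<in>UNIV. emeasure M (S n i))"
        by (rule mult_left_mono) simp
      also have "\<dots> = (\<Sum>i\<in>UNIV. of_nat n * emeasure M (S n i))"
        by (rule sum_distrib_left)
      also have "\<dots> = (\<Sum>i\<in>UNIV. ennreal (real n * measure M (S n i)))"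
        by (intro sum.cong refl) (simp add: emeasure_eq_measure ennreal_of_nat_eq_real_of_nat ennreal_mult'')
      finally show ?case .
    qed
    have "(\<lambda>n. \<Sum>i\<in>UNIV. ennreal (real n * measure M (S n i))) \<longlonglongrightarrow> (\<Sum>i\<in>(UNIV::'p set). 0)"
      using lower k unfolding S_def by (intro tendsto_sum tendsto_ennrealI[of _ 0, simplified]) auto
    then have lim: "(\<lambda>n. \<Sum>i\<in>UNIV. ennreal (real n * measure M (S n i))) \<longlonglongrightarrow> 0"
      by simp
    show ?thesis
      by (rule tendsto_sandwich[OF _ le tendsto_const lim]) simp
  qed
  moreover have "emeasure (scale_measure (of_nat n) (distr M borel (Y n))) {x. \<exists>i. ennreal d \<le> x i}
      = of_nat n * emeasure M (E n)" for n
    using Y closed_coordinatewise_ge by (simp add: emeasure_distr E_def vimage_def Int_def conj_commute)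
  ultimately show "(\<lambda>n. emeasure (scale_measure (of_nat n) (distr M borel (\<lambda>\<omega>. scalev (b n) (tcirc a (X \<omega>)))))
      {x. \<exists>i. ennreal d \<le> x i}) \<longlonglongrightarrow> 0"
    unfolding Y_def[abs_def] by simp
qed simp

theorem proposition3:
  fixes M :: "'a measure" and X :: "'a \<Rightarrow> 'p::finite \<Rightarrow> real" and b :: "nat \<Rightarrow> real"
    and \<nu> :: "('p \<Rightarrow> ennreal) measure" and \<alpha> a :: real
  assumes rv: "RV_plus \<alpha> M X b \<nu>"
    and lower: "\<forall>k>0. \<forall>i. ((\<lambda>n. real n * measure M {\<omega> \<in> space M. X \<omega> i \<le> exp (- k * b n)})
                  \<longlongrightarrow> 0) sequentially"
  shows "(a > 0 \<longrightarrow> vague_conv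
            (\<lambda>n. scale_measure (of_nat n) (distr M borel (\<lambda>\<omega>. scalev (b n) (tcirc a (X \<omega>)))))
            (scale_measure (ennreal (a powr \<alpha>)) \<nu>))
       \<and> (a \<le> 0 \<longrightarrow> vague_conv
            (\<lambda>n. scale_measure (of_nat n) (distr M borel (\<lambda>\<omega>. scalev (b n) (tcirc a (X \<omega>)))))
            (null_measure borel))"
  using vague_conv_tcirc_pos[OF rv] vague_conv_tcirc_nonpos[OF rv lower] by simp

end
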